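(* Let $B$ be an $n\times N$ complex matrix, let $x_1,\dots,x_N\in\mathbb{C}^n$ be its columns and $w_1,\dots,w_n\in\mathbb{C}^N$ its rows, and fix an integer $k\ge1$. For every tuple $(k_1,\dots,k_n)$ of nonnegative integers with $k_1+\dots+k_n=k$ put $$u_{(k_1,\dots,k_n)} = \sqrt{\tbinom{k}{k_1,\dots,k_n}}\; w_1^{(k_1)}\circ w_2^{(k_2)}\circ\cdots\circ w_n^{(k_n)}\in\mathbb{C}^N,\qquad \tbinom{k}{k_1,\dots,k_n}=\frac{k!}{k_1!\cdots k_n!}.$$ Then $\binom{n+k-1}{k}\sum_{i,j}|\langle x_i|x_j\rangle|^{2k} = \big(\sum_i\langle x_i|x_i\rangle^k\big)^2$ if and only if the vectors $u_{(k_1,\dots,k_n)}$ (over all such tuples) all have the same length and are pairwise orthogonal (vectors indexed by distinct tuples being orthogonal).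
   Context: For vectors (or matrices) of equal size, the Schur product $a\circ b$ is the entrywise product, and the Schur power $a^{(m)}$ is the entrywise $m$-th power (with $a^{(0)}$ the all-ones vector). $\langle x|y\rangle=\sum_t\overline{x_t}y_t$. *)

theory Defs
  imports "HOL-Analysis.Analysis"
begin

definition cinner :: "complex^'m \<Rightarrow> complex^'m \<Rightarrow> complex" where
  "cinner x y = (\<Sum>t\<in>UNIV. cnj (x $ t) * y $ t)"

definition clen :: "complex^'m \<Rightarrow> real" where
  "clen x = sqrt (\<Sum>t\<in>UNIV. (cmod (x $ t))\<^sup>2)"

text \<open>Schur power (a^(0) is the all-ones vector); the Schur product of several
  vectors is written entrywise as a product of entries.\<close>

definition schur_pow :: "complex^'m \<Rightarrow> nat \<Rightarrow> complex^'m" where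
  "schur_pow a m = (\<chi> t. (a $ t) ^ m)"

definition tuples :: "nat \<Rightarrow> ('n::finite \<Rightarrow> nat) set" where
  "tuples k = {\<kappa>. (\<Sum>r\<in>UNIV. \<kappa> r) = k}"

definition multinom :: "nat \<Rightarrow> ('n::finite \<Rightarrow> nat) \<Rightarrow> real" where
  "multinom k \<kappa> = fact k / (\<Prod>r\<in>UNIV. fact (\<kappa> r))"

text \<open>u_kappa = sqrt(multinomial) * (Schur product over rows r of w_r^(kappa_r)),
  where w_r = B $ r is the r-th row of B.\<close>
definition uvec :: "complex^'N^'n::finite \<Rightarrow> nat \<Rightarrow> ('n \<Rightarrow> nat) \<Rightarrow> complex^'N" where
  "uvec B k \<kappa> = (\<chi> t. complex_of_real (sqrt (multinom k \<kappa>)) *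
        (\<Prod>r\<in>UNIV. (schur_pow (B $ r) (\<kappa> r)) $ t))"

end

theory Submission
  imports Defs
begin

(* Write G = (<x_s|x_t>)_{s,t} for the Gram matrix of the columns and let U be the
   matrix whose rows are the vectors u_kappa.  By the multinomial theorem,
     sum_kappa conj(u_kappa(s)) u_kappa(t) = <x_s|x_t>^k,
   i.e. U* U is the Schur power G^(k).  Since U U* = (<u_kappa|u_kappa'>) has the same trace and
   Frobenius norm as U* U, the two sums in the theorem are the trace and the squared Frobenius
   norm of the Gram matrix of the family (u_kappa), which has binom(n+k-1,k) members.  For any
   finite family with Gram entries g and squared lengths a, card * sum |g|^2 >= (sum a)^2 with
   equality iff all lengths agree and all off-diagonal entries vanish. *)

section \<open>Tuples of exponents\<close>

definition supported_tuples :: "'n set \<Rightarrow> nat \<Rightarrow> ('n::finite \<Rightarrow> nat) set" where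
  "supported_tuples I k = {\<kappa>. (\<forall>r. r \<notin> I \<longrightarrow> \<kappa> r = 0) \<and> sum \<kappa> I = k}"

lemma supported_tuples_UNIV: "supported_tuples UNIV k = tuples k"
  unfolding supported_tuples_def tuples_def by auto

lemma supported_tuples_empty: "supported_tuples {} k = (if k = 0 then {\<lambda>_. 0} else {})"
  unfolding supported_tuples_def by auto

lemma finite_supported_tuples: "finite (supported_tuples I k)"
proof -
  have "supported_tuples I k \<subseteq> PiE UNIV (\<lambda>_. {..k})"
  proof
    fix \<kappa> assume "\<kappa> \<in> supported_tuples I k"
    then have "\<kappa> r \<le> k" for r
      unfolding supported_tuples_def by (cases "r \<in> I") (auto intro: member_le_sum)
    then show "\<kappa> \<in> PiE UNIV (\<lambda>_. {..k})" by auto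
  qed
  then show ?thesis by (rule finite_subset) (rule finite_PiE, auto)
qed

lemma sum_supported_tuples_insert:
  assumes "x \<notin> I"
  shows "sum f (supported_tuples (insert x I) k)
           = (\<Sum>j\<le>k. \<Sum>\<kappa>\<in>supported_tuples I (k - j). f (\<kappa>(x := j)))"
proof -
  have restrict: "sum (\<kappa>(x := j)) I = sum \<kappa> I" for \<kappa> :: "'a \<Rightarrow> nat" and j
    using assms by (intro sum.cong) auto
  have "sum f (supported_tuples (insert x I) k)
          = sum (\<lambda>(j, \<kappa>). f (\<kappa>(x := j))) (SIGMA j:{..k}. supported_tuples I (k - j))"
  proof (rule sum.reindex_bij_witness[where i="\<lambda>(j, \<kappa>). \<kappa>(x := j)" and j="\<lambda>\<kappa>. (\<kappa> x, \<kappa>(x := 0))"])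
    fix a assume "a \<in> (SIGMA j:{..k}. supported_tuples I (k - j))"
    then obtain j \<kappa> where a: "a = (j, \<kappa>)" "j \<le> k" "\<kappa> \<in> supported_tuples I (k - j)" by auto
    then have "\<kappa> x = 0" using assms unfolding supported_tuples_def by auto
    with a show "(\<lambda>\<kappa>. (\<kappa> x, \<kappa>(x := 0))) ((\<lambda>(j, \<kappa>). \<kappa>(x := j)) a) = a"
      by (auto simp: fun_eq_iff)
    show "(\<lambda>(j, \<kappa>). \<kappa>(x := j)) a \<in> supported_tuples (insert x I) k"
      using a assms restrict unfolding supported_tuples_def by auto
  next
    fix b assume b: "b \<in> supported_tuples (insert x I) k"
    show "(\<lambda>(j, \<kappa>). \<kappa>(x := j)) ((\<lambda>\<kappa>. (\<kappa> x, \<kappa>(x := 0))) b) = b" by auto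
    show "(\<lambda>(j, \<kappa>). f (\<kappa>(x := j))) ((\<lambda>\<kappa>. (\<kappa> x, \<kappa>(x := 0))) b) = f b" by auto
    have "sum b (insert x I) = b x + sum b I" using assms by simp
    with b restrict[of b 0]
    show "(\<lambda>\<kappa>. (\<kappa> x, \<kappa>(x := 0))) b \<in> (SIGMA j:{..k}. supported_tuples I (k - j))"
      unfolding supported_tuples_def by auto
  qed
  also have "\<dots> = (\<Sum>j\<le>k. \<Sum>\<kappa>\<in>supported_tuples I (k - j). f (\<kappa>(x := j)))"
    by (subst sum.Sigma) (auto simp: finite_supported_tuples)
  finally show ?thesis .
qed

lemma card_supported_tuples:
  "card (supported_tuples (I :: 'n::finite set) k) = (card I + k - 1) choose k"
proof -
  have "finite I" by simp
  then show ?thesis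
  proof (induction I arbitrary: k rule: finite_induct)
    case empty
    then show ?case by (simp add: supported_tuples_empty)
  next
    case (insert x I)
    have "card (supported_tuples (insert x I) k) = (\<Sum>j\<le>k. card (supported_tuples I (k - j)))"
      using sum_supported_tuples_insert[OF insert(2), of "\<lambda>_. 1::nat" k] by simp
    also have "\<dots> = (\<Sum>j\<le>k. (card I + (k - j) - 1) choose (k - j))"
      using insert.IH by simp
    also have "\<dots> = (\<Sum>j\<le>k. (card I + j - 1) choose j)"
      by (rule sum.reindex_bij_witness[where i="\<lambda>j. k - j" and j="\<lambda>j. k - j"]) auto
    also have "\<dots> = (card (insert x I) + k - 1) choose k"
    proof (cases "card I")
      case 0
      then have "(\<Sum>j\<le>k. (card I + j - 1) choose j) = (\<Sum>j\<le>k. if j = 0 then 1 else 0)"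
        by (intro sum.cong) auto
      with 0 insert show ?thesis by simp
    next
      case (Suc r)
      then have "(\<Sum>j\<le>k. (card I + j - 1) choose j) = (\<Sum>j\<le>k. (r + j) choose j)" by simp
      also have "\<dots> = Suc (r + k) choose k" by (rule sum_choose_lower)
      finally show ?thesis using Suc insert by simp
    qed
    finally show ?case .
  qed
qed

lemma multinomial_coefficient_insert:
  fixes \<kappa> :: "'n \<Rightarrow> nat"
  assumes "finite I" "x \<notin> I" "j \<le> k"
  shows "fact k / (\<Prod>r\<in>insert x I. fact ((\<kappa>(x := j)) r))
           = real (k choose j) * (fact (k - j) / (\<Prod>r\<in>I. fact (\<kappa> r)))"
proof -
  have "(\<Prod>r\<in>insert x I. fact ((\<kappa>(x := j)) r)) = fact j * (\<Prod>r\<in>I. fact (\<kappa> r) :: real)"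
    using assms by (simp add: prod.insert) (intro prod.cong, auto)
  moreover have "fact k = real (k choose j) * fact j * fact (k - j)"
    using binomial_fact[OF assms(3), where 'a = real] by (simp add: field_simps)
  moreover have "(\<Prod>r\<in>I. fact (\<kappa> r) :: real) \<noteq> 0" using assms(1) by simp
  ultimately show ?thesis by (simp add: field_simps)
qed

lemma multinomial_theorem:
  fixes a :: "'n::finite \<Rightarrow> 'a::{comm_ring_1, real_algebra_1}"
  shows "(\<Sum>\<kappa>\<in>supported_tuples I k.
            of_real (fact k / (\<Prod>r\<in>I. fact (\<kappa> r))) * (\<Prod>r\<in>I. a r ^ \<kappa> r)) = (\<Sum>r\<in>I. a r) ^ k"
proof -
  have "finite I" by simp
  then show ?thesis
  proof (induction I arbitrary: k rule: finite_induct)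
    case empty
    then show ?case by (simp add: supported_tuples_empty power_0_left)
  next
    case (insert x I)
    let ?term = "\<lambda>I k \<kappa>. of_real (fact k / (\<Prod>r\<in>I. fact (\<kappa> r))) * (\<Prod>r\<in>I. a r ^ \<kappa> r) :: 'a"
    have split_term: "?term (insert x I) k (\<kappa>(x := j))
                        = of_nat (k choose j) * a x ^ j * ?term I (k - j) \<kappa>" if "j \<le> k" for j \<kappa>
    proof -
      have "(\<Prod>r\<in>I. a r ^ (\<kappa>(x := j)) r) = (\<Prod>r\<in>I. a r ^ \<kappa> r)"
        using insert(2) by (intro prod.cong) auto
      then have "(\<Prod>r\<in>insert x I. a r ^ (\<kappa>(x := j)) r) = a x ^ j * (\<Prod>r\<in>I. a r ^ \<kappa> r)"
        using insert(1,2) by simp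
      then show ?thesis
        unfolding multinomial_coefficient_insert[OF insert(1,2) that]
        by (simp only: of_real_mult of_real_of_nat_eq ac_simps)
    qed
    have "sum (?term (insert x I) k) (supported_tuples (insert x I) k)
            = (\<Sum>j\<le>k. \<Sum>\<kappa>\<in>supported_tuples I (k - j). ?term (insert x I) k (\<kappa>(x := j)))"
      by (rule sum_supported_tuples_insert[OF insert(2)])
    also have "\<dots> = (\<Sum>j\<le>k. of_nat (k choose j) * a x ^ j * sum (?term I (k - j)) (supported_tuples I (k - j)))"
      unfolding sum_distrib_left by (intro sum.cong refl split_term) simp
    also have "\<dots> = (\<Sum>j\<le>k. of_nat (k choose j) * a x ^ j * (\<Sum>r\<in>I. a r) ^ (k - j))"
      using insert.IH by simp
    also have "\<dots> = (\<Sum>r\<in>insert x I. a r) ^ k"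
      using insert(1,2) by (simp add: binomial_ring)
    finally show ?case .
  qed
qed

lemma finite_tuples: "finite (tuples k :: ('n::finite \<Rightarrow> nat) set)"
  using finite_supported_tuples[of UNIV k] by (simp only: supported_tuples_UNIV)

lemma card_tuples: "card (tuples k :: ('n::finite \<Rightarrow> nat) set) = (CARD('n) + k - 1) choose k"
  using card_supported_tuples[of "UNIV :: 'n set" k] by (simp only: supported_tuples_UNIV)

lemma tuples_nonempty: "(tuples k :: ('n::finite \<Rightarrow> nat) set) \<noteq> {}"
proof -
  have "(\<lambda>_. 0)(undefined := k) \<in> tuples k"
    unfolding tuples_def by (simp add: sum.delta)
  then show ?thesis by blast
qed

section \<open>The vectors u_kappa realise the Schur power of the Gram matrix\<close>

lemma cinner_column: "cinner (column s B) (column t B) = (\<Sum>r\<in>UNIV. cnj (B $ r $ s) * B $ r $ t)"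
  unfolding cinner_def column_def by simp

lemma clen_nonneg: "clen x \<ge> 0"
  unfolding clen_def by (simp add: sum_nonneg)

lemma cinner_self_clen: "cinner x x = complex_of_real ((clen x)\<^sup>2)"
proof -
  have len: "(clen x)\<^sup>2 = (\<Sum>t\<in>UNIV. (cmod (x $ t))\<^sup>2)"
    unfolding clen_def by (simp add: sum_nonneg)
  show ?thesis
    unfolding len cinner_def of_real_sum complex_norm_square by (simp add: mult.commute)
qed

text \<open>Entrywise products of u_kappa: the square root of the multinomial coefficient squares to
  the coefficient itself.\<close>
lemma uvec_cnj_mult:
  "cnj (uvec B k \<kappa> $ s) * uvec B k \<kappa> $ t
     = complex_of_real (multinom k \<kappa>) * (\<Prod>r\<in>UNIV. (cnj (B $ r $ s) * B $ r $ t) ^ \<kappa> r)"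
proof -
  define c where "c = complex_of_real (sqrt (multinom k \<kappa>))"
  have entry: "uvec B k \<kappa> $ t' = c * (\<Prod>r\<in>UNIV. B $ r $ t' ^ \<kappa> r)" for t'
    unfolding uvec_def schur_pow_def c_def by simp
  have "multinom k \<kappa> \<ge> 0" unfolding multinom_def by (simp add: prod_nonneg)
  then have root: "cnj c * c = complex_of_real (multinom k \<kappa>)"
    unfolding c_def by (simp flip: of_real_mult)
  have "cnj (\<Prod>r\<in>UNIV. B $ r $ s ^ \<kappa> r) * (\<Prod>r\<in>UNIV. B $ r $ t ^ \<kappa> r)
          = (\<Prod>r\<in>UNIV. (cnj (B $ r $ s) * B $ r $ t) ^ \<kappa> r)"
    by (simp add: prod.distrib[symmetric] power_mult_distrib)
  then show ?thesis
    unfolding entry complex_cnj_mult root[symmetric] by (simp only: ac_simps)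
qed

text \<open>Key identity (U* U = G^(k)): summing over all tuples, the multinomial theorem turns the
  products of entries of u_kappa into the k-th power of the inner product of two columns.\<close>
lemma sum_uvec_cnj_mult:
  "(\<Sum>\<kappa>\<in>tuples k. cnj (uvec B k \<kappa> $ s) * uvec B k \<kappa> $ t) = cinner (column s B) (column t B) ^ k"
  unfolding uvec_cnj_mult multinom_def cinner_column supported_tuples_UNIV[symmetric]
  by (rule multinomial_theorem)

section \<open>Trace and Frobenius identities for a family of vectors\<close>

text \<open>For a finite family of vectors u_kappa (the rows of a matrix U), the Gram matrix U U* has
  the same trace as U* U.\<close>
lemma sum_cinner_self_swap:
  "(\<Sum>\<kappa>\<in>A. cinner (u \<kappa>) (u \<kappa>)) = (\<Sum>t\<in>UNIV. \<Sum>\<kappa>\<in>A. cnj (u \<kappa> $ t) * u \<kappa> $ t)"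
  unfolding cinner_def by (rule sum.swap)

lemma sum_swap_inner_outer:
  "(\<Sum>a\<in>A. \<Sum>b\<in>B. \<Sum>c\<in>C. \<Sum>d\<in>D. f a b c d)
     = (\<Sum>c\<in>C. \<Sum>d\<in>D. \<Sum>a\<in>A. \<Sum>b\<in>B. (f a b c d :: 'z::comm_monoid_add))"
proof -
  have "(\<Sum>a\<in>A. \<Sum>b\<in>B. \<Sum>c\<in>C. \<Sum>d\<in>D. f a b c d) = (\<Sum>a\<in>A. \<Sum>c\<in>C. \<Sum>b\<in>B. \<Sum>d\<in>D. f a b c d)"
    by (intro sum.cong refl sum.swap)
  also have "\<dots> = (\<Sum>a\<in>A. \<Sum>c\<in>C. \<Sum>d\<in>D. \<Sum>b\<in>B. f a b c d)"
    by (intro sum.cong refl sum.swap)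
  also have "\<dots> = (\<Sum>c\<in>C. \<Sum>a\<in>A. \<Sum>d\<in>D. \<Sum>b\<in>B. f a b c d)"
    by (rule sum.swap)
  also have "\<dots> = (\<Sum>c\<in>C. \<Sum>d\<in>D. \<Sum>a\<in>A. \<Sum>b\<in>B. f a b c d)"
    by (intro sum.cong refl sum.swap)
  finally show ?thesis .
qed

text \<open>... and the same Frobenius norm: both sides expand to the quadruple sum of
  conj(u_kappa(s)) u_kappa(t) u_kappa'(s) conj(u_kappa'(t)).\<close>
lemma sum_cmod_cinner_swap:
  fixes u :: "'k \<Rightarrow> complex^'N::finite"
  shows "(\<Sum>\<kappa>\<in>A. \<Sum>\<kappa>'\<in>A. (cmod (cinner (u \<kappa>) (u \<kappa>')))\<^sup>2)
           = (\<Sum>s\<in>UNIV. \<Sum>t\<in>UNIV. (cmod (\<Sum>\<kappa>\<in>A. cnj (u \<kappa> $ s) * u \<kappa> $ t))\<^sup>2)"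
proof -
  let ?q = "\<lambda>\<kappa> \<kappa>' s t. (cnj (u \<kappa> $ s) * u \<kappa> $ t) * (u \<kappa>' $ s * cnj (u \<kappa>' $ t))"
  have "complex_of_real ((cmod (cinner (u \<kappa>) (u \<kappa>')))\<^sup>2) = (\<Sum>s\<in>UNIV. \<Sum>t\<in>UNIV. ?q \<kappa> \<kappa>' s t)"
    for \<kappa> \<kappa>'
  proof -
    have "complex_of_real ((cmod (cinner (u \<kappa>) (u \<kappa>')))\<^sup>2)
            = (\<Sum>s\<in>UNIV. cnj (u \<kappa> $ s) * u \<kappa>' $ s) * (\<Sum>t\<in>UNIV. u \<kappa> $ t * cnj (u \<kappa>' $ t))"
      unfolding complex_norm_square by (simp add: cinner_def mult.commute)
    also have "\<dots> = (\<Sum>s\<in>UNIV. \<Sum>t\<in>UNIV. (cnj (u \<kappa> $ s) * u \<kappa>' $ s) * (u \<kappa> $ t * cnj (u \<kappa>' $ t)))"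
      by (rule sum_product)
    finally show ?thesis
      by (simp only: ac_simps)
  qed
  then have "complex_of_real (\<Sum>\<kappa>\<in>A. \<Sum>\<kappa>'\<in>A. (cmod (cinner (u \<kappa>) (u \<kappa>')))\<^sup>2)
               = (\<Sum>\<kappa>\<in>A. \<Sum>\<kappa>'\<in>A. \<Sum>s\<in>UNIV. \<Sum>t\<in>UNIV. ?q \<kappa> \<kappa>' s t)"
    by (simp add: of_real_sum)
  also have "\<dots> = (\<Sum>s\<in>UNIV. \<Sum>t\<in>UNIV. \<Sum>\<kappa>\<in>A. \<Sum>\<kappa>'\<in>A. ?q \<kappa> \<kappa>' s t)"
    by (rule sum_swap_inner_outer)
  also have "\<dots> = (\<Sum>s\<in>UNIV. \<Sum>t\<in>UNIV. (\<Sum>\<kappa>\<in>A. cnj (u \<kappa> $ s) * u \<kappa> $ t)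
                                         * (\<Sum>\<kappa>'\<in>A. u \<kappa>' $ s * cnj (u \<kappa>' $ t)))"
    by (simp only: sum_product)
  also have "\<dots> = (\<Sum>s\<in>UNIV. \<Sum>t\<in>UNIV. (\<Sum>\<kappa>\<in>A. cnj (u \<kappa> $ s) * u \<kappa> $ t)
                                         * cnj (\<Sum>\<kappa>'\<in>A. cnj (u \<kappa>' $ s) * u \<kappa>' $ t))"
    by (simp add: mult.commute)
  also have "\<dots> = complex_of_real (\<Sum>s\<in>UNIV. \<Sum>t\<in>UNIV. (cmod (\<Sum>\<kappa>\<in>A. cnj (u \<kappa> $ s) * u \<kappa> $ t))\<^sup>2)"
    by (simp only: complex_norm_square of_real_sum)
  finally show ?thesis by (simp only: of_real_eq_iff)
qed

section \<open>Equality case of card * sum g >= (sum a)^2\<close>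

text \<open>For a finite family with "Gram data" g (g x x = (a x)^2), the defect
  card A * sum g - (sum a)^2 is a sum of squares of length differences (Lagrange's identity)
  plus card A times the off-diagonal part of g.\<close>
lemma card_sum_gram_defect:
  fixes a :: "'k \<Rightarrow> real" and g :: "'k \<Rightarrow> 'k \<Rightarrow> real"
  assumes "finite A" and diag: "\<forall>x\<in>A. g x x = (a x)\<^sup>2"
  shows "real (card A) * (\<Sum>x\<in>A. \<Sum>y\<in>A. g x y) - (\<Sum>x\<in>A. a x)\<^sup>2
           = (\<Sum>x\<in>A. \<Sum>y\<in>A. (a x - a y)\<^sup>2) / 2
             + real (card A) * (\<Sum>x\<in>A. \<Sum>y\<in>A. if x = y then 0 else g x y)"
proof -
  have split_diag: "(\<Sum>x\<in>A. \<Sum>y\<in>A. g x y)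
                      = (\<Sum>x\<in>A. (a x)\<^sup>2) + (\<Sum>x\<in>A. \<Sum>y\<in>A. if x = y then 0 else g x y)"
  proof -
    have "(\<Sum>x\<in>A. \<Sum>y\<in>A. g x y)
            = (\<Sum>x\<in>A. \<Sum>y\<in>A. (if x = y then (a x)\<^sup>2 else 0) + (if x = y then 0 else g x y))"
      using diag by (intro sum.cong refl) auto
    then show ?thesis
      using \<open>finite A\<close> by (simp add: sum.distrib)
  qed
  have lagrange: "(\<Sum>x\<in>A. \<Sum>y\<in>A. (a x - a y)\<^sup>2)
                    = 2 * real (card A) * (\<Sum>x\<in>A. (a x)\<^sup>2) - 2 * (\<Sum>x\<in>A. a x)\<^sup>2"
  proof -
    have "(\<Sum>x\<in>A. \<Sum>y\<in>A. (a x - a y)\<^sup>2) = (\<Sum>x\<in>A. \<Sum>y\<in>A. (a x)\<^sup>2 + (a y)\<^sup>2 - 2 * a x * a y)"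
      by (simp add: power2_diff)
    also have "\<dots> = (\<Sum>x\<in>A. real (card A) * (a x)\<^sup>2 + (\<Sum>y\<in>A. (a y)\<^sup>2) - 2 * a x * (\<Sum>y\<in>A. a y))"
      by (simp add: sum.distrib sum_subtractf sum_distrib_left)
    also have "\<dots> = 2 * real (card A) * (\<Sum>x\<in>A. (a x)\<^sup>2) - 2 * (\<Sum>x\<in>A. a x)\<^sup>2"
      by (simp add: sum.distrib sum_subtractf sum_distrib_left[symmetric]
          sum_distrib_right[symmetric] power2_eq_square)
    finally show ?thesis .
  qed
  then have "(\<Sum>x\<in>A. \<Sum>y\<in>A. (a x - a y)\<^sup>2) / 2
               = real (card A) * (\<Sum>x\<in>A. (a x)\<^sup>2) - (\<Sum>x\<in>A. a x)\<^sup>2"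
    by simp
  then show ?thesis
    unfolding split_diag by (simp add: algebra_simps)
qed

lemma card_sum_gram_eq_iff:
  fixes a :: "'k \<Rightarrow> real" and g :: "'k \<Rightarrow> 'k \<Rightarrow> real"
  assumes fin: "finite A" and ne: "A \<noteq> {}"
    and nonneg: "\<forall>x\<in>A. \<forall>y\<in>A. g x y \<ge> 0" and diag: "\<forall>x\<in>A. g x x = (a x)\<^sup>2"
  shows "real (card A) * (\<Sum>x\<in>A. \<Sum>y\<in>A. g x y) = (\<Sum>x\<in>A. a x)\<^sup>2 \<longleftrightarrow>
           (\<forall>x\<in>A. \<forall>y\<in>A. a x = a y) \<and> (\<forall>x\<in>A. \<forall>y\<in>A. x \<noteq> y \<longrightarrow> g x y = 0)"
proof -
  define Q where "Q = (\<Sum>x\<in>A. \<Sum>y\<in>A. (a x - a y)\<^sup>2)"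
  define R where "R = (\<Sum>x\<in>A. \<Sum>y\<in>A. if x = y then 0 else g x y)"
  have card_pos: "real (card A) > 0" using fin ne by (simp add: card_gt_0_iff)
  have Q_zero: "Q = 0 \<longleftrightarrow> (\<forall>x\<in>A. \<forall>y\<in>A. a x = a y)"
    unfolding Q_def using fin by (simp add: sum_nonneg_eq_0_iff sum_nonneg)
  have R_zero: "R = 0 \<longleftrightarrow> (\<forall>x\<in>A. \<forall>y\<in>A. x \<noteq> y \<longrightarrow> g x y = 0)"
    unfolding R_def using fin nonneg by (simp add: sum_nonneg_eq_0_iff sum_nonneg)
  have "Q \<ge> 0" unfolding Q_def by (intro sum_nonneg) auto
  have "R \<ge> 0" unfolding R_def using nonneg by (intro sum_nonneg) auto
  have defect: "real (card A) * (\<Sum>x\<in>A. \<Sum>y\<in>A. g x y) - (\<Sum>x\<in>A. a x)\<^sup>2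
                   = Q / 2 + real (card A) * R"
    unfolding Q_def R_def using fin diag by (rule card_sum_gram_defect)
  have "real (card A) * (\<Sum>x\<in>A. \<Sum>y\<in>A. g x y) = (\<Sum>x\<in>A. a x)\<^sup>2
          \<longleftrightarrow> Q / 2 + real (card A) * R = 0"
    using defect by linarith
  also have "\<dots> \<longleftrightarrow> Q = 0 \<and> R = 0"
    using \<open>Q \<ge> 0\<close> \<open>R \<ge> 0\<close> card_pos by (simp add: add_nonneg_eq_0_iff)
  finally show ?thesis using Q_zero R_zero by simp
qed

text \<open>The two sums are the trace and the squared Frobenius norm of the Gram matrix of the
  family (u_kappa); the argument works for every k.\<close>

theorem theorem4:
  fixes B :: "complex^'N::finite^'n::finite" and k :: nat
  assumes "k \<ge> 1"
  shows "complex_of_real (real ((CARD('n) + k - 1) choose k) *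
            (\<Sum>i\<in>UNIV. \<Sum>j\<in>UNIV. (cmod (cinner (column i B) (column j B))) ^ (2 * k)))
           = (\<Sum>i\<in>UNIV. (cinner (column i B) (column i B)) ^ k) ^ 2
    \<longleftrightarrow> ((\<forall>\<kappa>\<in>tuples k. \<forall>\<kappa>'\<in>tuples k. clen (uvec B k \<kappa>) = clen (uvec B k \<kappa>')) \<and>
         (\<forall>\<kappa>\<in>tuples k. \<forall>\<kappa>'\<in>tuples k. \<kappa> \<noteq> \<kappa>' \<longrightarrow> cinner (uvec B k \<kappa>) (uvec B k \<kappa>') = 0))"
proof -
  let ?u = "uvec B k"
  define a where "a \<kappa> = (clen (?u \<kappa>))\<^sup>2" for \<kappa>
  define g where "g \<kappa> \<kappa>' = (cmod (cinner (?u \<kappa>) (?u \<kappa>')))\<^sup>2" for \<kappa> \<kappa>'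
  have trace: "(\<Sum>i\<in>UNIV. cinner (column i B) (column i B) ^ k) = complex_of_real (\<Sum>\<kappa>\<in>tuples k. a \<kappa>)"
    unfolding a_def of_real_sum cinner_self_clen[symmetric] sum_cinner_self_swap sum_uvec_cnj_mult ..
  have frobenius: "(\<Sum>i\<in>UNIV. \<Sum>j\<in>UNIV. (cmod (cinner (column i B) (column j B))) ^ (2 * k))
                     = (\<Sum>\<kappa>\<in>tuples k. \<Sum>\<kappa>'\<in>tuples k. g \<kappa> \<kappa>')"
    unfolding g_def sum_cmod_cinner_swap sum_uvec_cnj_mult norm_power
    by (simp add: power_mult[symmetric] mult.commute)
  have same_length: "clen (?u \<kappa>) = clen (?u \<kappa>') \<longleftrightarrow> a \<kappa> = a \<kappa>'" for \<kappa> \<kappa>'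
    unfolding a_def by (rule power2_eq_iff_nonneg[OF clen_nonneg clen_nonneg, symmetric])
  have reduce: "complex_of_real (real ((CARD('n) + k - 1) choose k) *
                   (\<Sum>i\<in>UNIV. \<Sum>j\<in>UNIV. (cmod (cinner (column i B) (column j B))) ^ (2 * k)))
                  = (\<Sum>i\<in>UNIV. (cinner (column i B) (column i B)) ^ k) ^ 2
                \<longleftrightarrow> real (card (tuples k :: ('n \<Rightarrow> nat) set)) * (\<Sum>\<kappa>\<in>tuples k. \<Sum>\<kappa>'\<in>tuples k. g \<kappa> \<kappa>')
                      = (\<Sum>\<kappa>\<in>tuples k. a \<kappa>)\<^sup>2"
    unfolding trace frobenius card_tuples of_real_power[symmetric] of_real_eq_iff ..
  have "\<forall>\<kappa>\<in>tuples k. g \<kappa> \<kappa> = (a \<kappa>)\<^sup>2"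
    unfolding g_def a_def cinner_self_clen norm_of_real by simp
  then show ?thesis
    using card_sum_gram_eq_iff[OF finite_tuples[of k] tuples_nonempty, where g = g and a = a]
    unfolding reduce same_length g_def by simp
qed

end
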